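(* Let $\gamma$ be a smooth nondegenerate curve in the equi-affine plane, parametrised by equi-affine arc-length $s$, with equi-affine curvature $\kappa$. Then $\gamma$ is a critical point of $\int\kappa\,\mathrm{d}s$ under area constraint, without being an unconstrained critical point of $\int\kappa\,\mathrm{d}s$, if and only if there exist a point $O$ (origin) and a constant $c\neq 0$ such that the equi-affine support function of $\gamma$ with respect to $O$ satisfies $\rho_O=c\,\kappa$.
   Context: The equi-affine plane is $\mathbb{R}^2$ with area form $|u,v|=\det(u,v)$. The curve satisfies $|\gamma',\gamma''|=1$; primes denote $s$-derivatives; $T=\gamma'$, $N=\gamma''$, and $\kappa$ is defined by $\gamma'''=-\kappa\gamma'$. For a point $O$, write the position vector $P=\gamma-O=-\rho_O\,N+\phi\,T$; the function $\rho_O=|P,T|$ is the equi-affine support function with respect to $O$. Variations are smooth and compactly supported; a variation with variation vector field $f\,N+g\,T$ changes the (enclosed, signed) area to first order by $\delta\,\mathrm{Area}=-\int f\,\mathrm{d}s$. The curve is a critical point of $\int\kappa\,\mathrm{d}s$ under area constraint if there is a constant $\lambda$ with $\delta\int\kappa\,\mathrm{d}s=\lambda\,\delta\,\mathrm{Area}$ for all such variations; it is an unconstrained critical point if $\delta\int\kappa\,\mathrm{d}s=0$ for all such variations. *)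

theory Defs
  imports "HOL-Analysis.Analysis"
begin

text \<open>Plane curves are given by their two component functions x, y :: real => real
  (only their values on an open parameter interval I matter).\<close>

definition det2 :: "real \<Rightarrow> real \<Rightarrow> real \<Rightarrow> real \<Rightarrow> real" where
  "det2 u1 u2 v1 v2 = u1 * v2 - u2 * v1"

definition C_inf_on :: "real set \<Rightarrow> (real \<Rightarrow> real) \<Rightarrow> bool" where
  "C_inf_on I f \<longleftrightarrow> (\<forall>n. \<forall>t\<in>I. ((deriv ^^ n) f) differentiable (at t))"

definition ea_kappa :: "(real \<Rightarrow> real) \<Rightarrow> (real \<Rightarrow> real) \<Rightarrow> real \<Rightarrow> real" where
  "ea_kappa x y s = (THE k. (deriv ^^ 3) x s = - k * deriv x s \<and> (deriv ^^ 3) y s = - k * deriv y s)"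

definition support_fn :: "(real \<Rightarrow> real) \<Rightarrow> (real \<Rightarrow> real) \<Rightarrow> real \<Rightarrow> real \<Rightarrow> real \<Rightarrow> real" where
  "support_fn x y o1 o2 s = det2 (x s - o1) (y s - o2) (deriv x s) (deriv y s)"

definition ea_speed :: "(real \<Rightarrow> real) \<Rightarrow> (real \<Rightarrow> real) \<Rightarrow> real \<Rightarrow> real" where
  "ea_speed x y t = (det2 (deriv x t) (deriv y t) (deriv (deriv x) t) (deriv (deriv y) t)) powr (1/3)"

definition ea_D :: "(real \<Rightarrow> real) \<Rightarrow> (real \<Rightarrow> real) \<Rightarrow> (real \<Rightarrow> real) \<Rightarrow> real \<Rightarrow> real" where
  "ea_D x y f = (\<lambda>t. deriv f t / ea_speed x y t)"

definition ea_curv_gen :: "(real \<Rightarrow> real) \<Rightarrow> (real \<Rightarrow> real) \<Rightarrow> real \<Rightarrow> real" where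
  "ea_curv_gen x y t =
     det2 (ea_D x y (ea_D x y x) t) (ea_D x y (ea_D x y y) t)
          (ea_D x y (ea_D x y (ea_D x y x)) t) (ea_D x y (ea_D x y (ea_D x y y)) t)"

definition total_curv :: "(real \<Rightarrow> real) \<Rightarrow> (real \<Rightarrow> real) \<Rightarrow> real \<Rightarrow> real \<Rightarrow> real" where
  "total_curv x y a b = integral {a..b} (\<lambda>t. ea_curv_gen x y t * ea_speed x y t)"

definition admissible_var ::
  "real set \<Rightarrow> (real \<Rightarrow> real) \<Rightarrow> (real \<Rightarrow> real) \<Rightarrow> real \<Rightarrow> real \<Rightarrow> bool" where
  "admissible_var I v1 v2 a b \<longleftrightarrow> C_inf_on I v1 \<and> C_inf_on I v2 \<and> a \<in> I \<and> b \<in> I \<and> a < b \<and>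
     (\<forall>t\<in>I. t \<notin> {a..b} \<longrightarrow> v1 t = 0 \<and> v2 t = 0)"

definition curv_variation ::
  "(real \<Rightarrow> real) \<Rightarrow> (real \<Rightarrow> real) \<Rightarrow> (real \<Rightarrow> real) \<Rightarrow> (real \<Rightarrow> real) \<Rightarrow> real \<Rightarrow> real \<Rightarrow> real \<Rightarrow> real" where
  "curv_variation x y v1 v2 a b = (\<lambda>eps. total_curv (\<lambda>t. x t + eps * v1 t) (\<lambda>t. y t + eps * v2 t) a b)"

text \<open>First variation of area: delta Area = - integral f ds, where V = f N + g T,
  i.e. f = |T, V| (arc-length parametrised curve, so ds = dt).\<close>
definition area_variation ::
  "(real \<Rightarrow> real) \<Rightarrow> (real \<Rightarrow> real) \<Rightarrow> (real \<Rightarrow> real) \<Rightarrow> (real \<Rightarrow> real) \<Rightarrow> real \<Rightarrow> real \<Rightarrow> real" where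
  "area_variation x y v1 v2 a b = - integral {a..b} (\<lambda>t. det2 (deriv x t) (deriv y t) (v1 t) (v2 t))"

definition area_constrained_critical :: "real set \<Rightarrow> (real \<Rightarrow> real) \<Rightarrow> (real \<Rightarrow> real) \<Rightarrow> bool" where
  "area_constrained_critical I x y \<longleftrightarrow> (\<exists>lam. \<forall>v1 v2 a b. admissible_var I v1 v2 a b \<longrightarrow>
     (curv_variation x y v1 v2 a b has_real_derivative (lam * area_variation x y v1 v2 a b)) (at 0))"

definition unconstrained_critical :: "real set \<Rightarrow> (real \<Rightarrow> real) \<Rightarrow> (real \<Rightarrow> real) \<Rightarrow> bool" where
  "unconstrained_critical I x y \<longleftrightarrow> (\<forall>v1 v2 a b. admissible_var I v1 v2 a b \<longrightarrow>
     (curv_variation x y v1 v2 a b has_real_derivative 0) (at 0))"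

end

theory Submission
  imports Defs
begin

text \<open>
  For a variation \<open>V\<close> of a curve \<open>\<gamma>\<close> in equi-affine arc length, with \<open>f = |\<gamma>', V|\<close>, the first
  variation of \<open>\<integral>\<kappa> ds\<close> is \<open>(2/3) \<integral> f (\<kappa>\<^sub>s\<^sub>s + \<kappa>\<^sup>2) ds\<close>: differentiating the formula for
  \<open>\<kappa> ds/dt\<close> of a general curve under the integral sign and using the Frenet equation
  \<open>\<gamma>''' = -\<kappa> \<gamma>'\<close>, the integrand differs from \<open>(2/3) f (\<kappa>\<^sub>s\<^sub>s + \<kappa>\<^sup>2)\<close> by the derivative of a
  term that vanishes with \<open>V\<close>. Bump variations localise \<open>f\<close>, so \<open>\<gamma>\<close> is critical under the area
  constraint iff \<open>\<kappa>\<^sub>s\<^sub>s + \<kappa>\<^sup>2\<close> is a constant \<open>K\<close>, and not critical without it iff moreover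
  \<open>K \<noteq> 0\<close>. For \<open>K \<noteq> 0\<close> the point \<open>O = \<gamma> - (\<kappa>\<^sub>s \<gamma>' - \<kappa> \<gamma>'') / K\<close> is fixed and
  \<open>\<rho>\<^sub>O = \<kappa> / K\<close>; conversely, differentiating \<open>\<rho>\<^sub>O = c \<kappa>\<close> twice gives
  \<open>1 - \<kappa> \<rho>\<^sub>O = c \<kappa>\<^sub>s\<^sub>s\<close>, that is \<open>\<kappa>\<^sub>s\<^sub>s + \<kappa>\<^sup>2 = 1 / c\<close>.
\<close>

section \<open>Smooth real functions\<close>

abbreviation Dn :: "nat \<Rightarrow> (real \<Rightarrow> real) \<Rightarrow> real \<Rightarrow> real" where
  "Dn n f \<equiv> (deriv ^^ n) f"

lemma Dn_Suc_inner: "Dn (Suc n) f = Dn n (deriv f)"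
  by (simp add: funpow_Suc_right del: funpow.simps)

lemma C_inf_on_subset: "C_inf_on T f \<Longrightarrow> S \<subseteq> T \<Longrightarrow> C_inf_on S f"
  unfolding C_inf_on_def by blast

lemma C_inf_on_has_real_derivative:
  "C_inf_on I f \<Longrightarrow> t \<in> I \<Longrightarrow> (Dn n f has_real_derivative Dn (Suc n) f t) (at t)"
  unfolding C_inf_on_def by (simp add: DERIV_deriv_iff_real_differentiable)

lemma C_inf_on_continuous_on: "C_inf_on I f \<Longrightarrow> continuous_on I (Dn n f)"
  by (meson C_inf_on_has_real_derivative DERIV_isCont continuous_at_imp_continuous_on)

lemma C_inf_on_UNIV_deriv: "C_inf_on UNIV f \<Longrightarrow> C_inf_on UNIV (deriv f)"
  unfolding C_inf_on_def by (metis Dn_Suc_inner)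

lemma C_inf_on_UNIV_const: "C_inf_on UNIV (\<lambda>t. c)"
proof -
  have "Dn (Suc n) (\<lambda>t. c) = (\<lambda>t. 0)" for n
    by (induction n) auto
  then show ?thesis
    unfolding C_inf_on_def by (metis funpow_0 differentiable_const not0_implies_Suc)
qed

lemma deriv_eq_if_eq_on_open:
  fixes f g :: "real \<Rightarrow> real"
  assumes "open S" "t \<in> S" "\<And>s. s \<in> S \<Longrightarrow> f s = g s" "(g has_real_derivative D) (at t)"
  shows "deriv f t = D"
  using has_field_derivative_transform_within_open[OF assms(4,1,2)] assms(3)
  by (metis DERIV_imp_deriv)

lemma DERIV_zero_if_const_on_open:
  fixes f :: "real \<Rightarrow> real"
  assumes "open I" "t \<in> I" "\<And>s. s \<in> I \<Longrightarrow> f s = c" "(f has_real_derivative D) (at t)"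
  shows "D = 0"
proof -
  have "((\<lambda>_. c) has_real_derivative 0) (at t)"
    by simp
  then have "(f has_real_derivative 0) (at t)"
    by (rule has_field_derivative_transform_within_open[OF _ assms(1,2)]) (use assms(3) in auto)
  then show ?thesis
    using assms(4) DERIV_unique by blast
qed

lemma Dn_eq_0_on_open:
  assumes "open U" "\<And>s. s \<in> U \<Longrightarrow> f s = 0" "s \<in> U"
  shows "Dn k f s = 0"
  using assms(3)
proof (induction k arbitrary: s)
  case (Suc k)
  have "deriv (Dn k f) s = 0"
    by (rule deriv_eq_if_eq_on_open[OF assms(1) Suc.prems, of _ "\<lambda>_. 0"]) (auto simp: Suc.IH)
  then show ?case
    by simp
qed (use assms(2) in simp)

lemma isCont_eq_0_if_eventually_0:
  fixes f :: "real \<Rightarrow> real"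
  assumes "isCont f t" "F \<noteq> bot" "F \<le> at t" "eventually (\<lambda>s. f s = 0) F"
  shows "f t = 0"
proof -
  have "(f \<longlongrightarrow> f t) F"
    using assms(1,3) continuous_at tendsto_mono by blast
  moreover have "(f \<longlongrightarrow> 0) F"
    using assms(4) by (rule tendsto_eventually)
  ultimately show ?thesis
    using assms(2) tendsto_unique by blast
qed

lemma Dn_eq_0_if_eq_0_outside_Icc:
  assumes I: "open I" and z: "C_inf_on I z" and "a < b"
    and vanish: "\<And>s. s \<in> I \<Longrightarrow> s \<notin> {a..b} \<Longrightarrow> z s = 0"
    and t: "t \<in> I" "t \<notin> {a<..<b}"
  shows "Dn k z t = 0"
proof -
  define U where "U = I - {a..b}"
  have U: "open U" "\<And>s. s \<in> U \<Longrightarrow> z s = 0"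
    using I vanish by (auto simp: U_def)
  show ?thesis
  proof (cases "t \<in> U")
    case True
    show ?thesis
      by (rule Dn_eq_0_on_open[OF U True])
  next
    case False
    then have ab: "t = a \<or> t = b"
      using t unfolding U_def by auto
    obtain \<epsilon> where \<epsilon>: "\<epsilon> > 0" "ball t \<epsilon> \<subseteq> I"
      using I t(1) open_contains_ball by blast
    define F where "F = (if t = a then at_left t else at_right t)"
    have "\<forall>\<^sub>F s in F. s \<in> U"
    proof (cases "t = a")
      case True
      have "\<forall>\<^sub>F s in at_left t. s \<in> {t - \<epsilon><..<t}"
        by (rule eventually_at_left_real) (use \<epsilon> in simp)
      then have "\<forall>\<^sub>F s in at_left t. s \<in> U"
        by eventually_elim (use True \<epsilon> \<open>a < b\<close> in \<open>auto simp: U_def dist_real_def subset_iff\<close>)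
      then show ?thesis
        using True by (simp add: F_def)
    next
      case False
      have "\<forall>\<^sub>F s in at_right t. s \<in> {t<..<t + \<epsilon>}"
        by (rule eventually_at_right_real) (use \<epsilon> in simp)
      then have "\<forall>\<^sub>F s in at_right t. s \<in> U"
        by eventually_elim (use False ab \<epsilon> \<open>a < b\<close> in \<open>auto simp: U_def dist_real_def subset_iff\<close>)
      then show ?thesis
        using False by (simp add: F_def)
    qed
    then have "\<forall>\<^sub>F s in F. Dn k z s = 0"
      by eventually_elim (rule Dn_eq_0_on_open[OF U])
    moreover have "isCont (Dn k z) t"
      using C_inf_on_has_real_derivative[OF z t(1)] by (rule DERIV_isCont)
    ultimately show ?thesis
      by (intro isCont_eq_0_if_eventually_0[where F=F])
         (auto simp: F_def trivial_limit_at_left_real trivial_limit_at_right_real intro: at_le)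
  qed
qed

lemma Dn_add:
  assumes "\<And>k t. k < m \<Longrightarrow> Dn k f differentiable at t"
    and "\<And>k t. k < m \<Longrightarrow> Dn k g differentiable at t"
  shows "Dn m (\<lambda>t. f t + g t) = (\<lambda>t. Dn m f t + Dn m g t)"
  using assms
proof (induction m)
  case (Suc m)
  then have "Dn (Suc m) (\<lambda>t. f t + g t) = deriv (\<lambda>t. Dn m f t + Dn m g t)"
    by simp
  also have "\<dots> = (\<lambda>t. Dn (Suc m) f t + Dn (Suc m) g t)"
    by (intro ext DERIV_imp_deriv DERIV_add) (simp_all add: DERIV_deriv_iff_real_differentiable Suc.prems)
  finally show ?case .
qed simp

lemma C_inf_on_UNIV_mult:
  assumes "C_inf_on UNIV f" "C_inf_on UNIV g"
  shows "C_inf_on UNIV (\<lambda>t. f t * g t)"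
proof -
  have "\<forall>f g. C_inf_on UNIV f \<longrightarrow> C_inf_on UNIV g \<longrightarrow>
          (\<forall>k\<le>n. \<forall>t. Dn k (\<lambda>t. f t * g t) differentiable at t)" for n
  proof (induction n)
    case 0
    then show ?case
      by (auto simp: C_inf_on_def intro!: differentiable_mult[of _ _ UNIV, simplified]
               dest: spec[of _ 0])
  next
    case (Suc n)
    show ?case
    proof (intro allI impI)
      fix f g k t
      assume f: "C_inf_on UNIV f" and g: "C_inf_on UNIV g" and k: "k \<le> Suc n"
      note f' = C_inf_on_UNIV_deriv[OF f] and g' = C_inf_on_UNIV_deriv[OF g]
      show "Dn k (\<lambda>t. f t * g t) differentiable at t"
      proof (cases k)
        case 0
        then show ?thesis using Suc.IH f g by blast
      next
        case (Suc k')
        have "(f has_real_derivative deriv f s) (at s)" "(g has_real_derivative deriv g s) (at s)"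
          for s using C_inf_on_has_real_derivative[OF f, of s 0]
            C_inf_on_has_real_derivative[OF g, of s 0] by simp_all
        then have "deriv (\<lambda>t. f t * g t) = (\<lambda>t. deriv f t * g t + f t * deriv g t)"
          by (intro ext DERIV_imp_deriv) (auto intro!: derivative_eq_intros)
        then have "Dn k (\<lambda>t. f t * g t)
            = (\<lambda>t. Dn k' (\<lambda>t. deriv f t * g t) t + Dn k' (\<lambda>t. f t * deriv g t) t)"
          using Suc k Suc.IH f g f' g' by (simp add: Dn_Suc_inner Dn_add del: funpow.simps)
        moreover have "Dn k' (\<lambda>t. deriv f t * g t) differentiable at t"
          "Dn k' (\<lambda>t. f t * deriv g t) differentiable at t"
          using Suc k Suc.IH f g f' g' by auto
        ultimately show ?thesis by simp
      qed
    qed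
  qed
  then show ?thesis using assms unfolding C_inf_on_def by blast
qed

lemma Dn_affine_has_real_derivative:
  assumes "C_inf_on UNIV f"
  shows "((\<lambda>t. Dn n f (s * t + c)) has_real_derivative Dn (Suc n) f (s * t + c) * s) (at t)"
proof -
  have "(Dn n f has_real_derivative Dn (Suc n) f (s * t + c)) (at (s * t + c))"
    by (rule C_inf_on_has_real_derivative[OF assms]) simp
  moreover have "((\<lambda>t. s * t + c) has_real_derivative s) (at t)"
    by (auto intro!: derivative_eq_intros)
  ultimately show ?thesis
    by (rule DERIV_chain2)
qed

lemma Dn_affine:
  assumes "C_inf_on UNIV f"
  shows "Dn n (\<lambda>t. f (s * t + c)) = (\<lambda>t. s ^ n * Dn n f (s * t + c))"
proof (induction n)
  case (Suc n)
  have "((\<lambda>t. s ^ n * Dn n f (s * t + c)) has_real_derivative s ^ Suc n * Dn (Suc n) f (s * t + c)) (at t)"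
    for t using DERIV_cmult[OF Dn_affine_has_real_derivative[OF assms], of "s ^ n" n s c t]
    by (simp only: power_Suc ac_simps)
  then have "deriv (\<lambda>t. s ^ n * Dn n f (s * t + c)) = (\<lambda>t. s ^ Suc n * Dn (Suc n) f (s * t + c))"
    by (intro ext DERIV_imp_deriv)
  then show ?case
    using Suc.IH by (simp only: funpow.simps(2) o_apply)
qed simp

lemma C_inf_on_UNIV_affine:
  assumes "C_inf_on UNIV f"
  shows "C_inf_on UNIV (\<lambda>t. f (s * t + c))"
proof -
  have "(\<lambda>t. s ^ n * Dn n f (s * t + c)) differentiable at t" for n t
    using DERIV_cmult[OF Dn_affine_has_real_derivative[OF assms], of "s ^ n" n s c t]
    by (auto simp: real_differentiable_def)
  then show ?thesis
    unfolding C_inf_on_def Dn_affine[OF assms] by blast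
qed

section \<open>A smooth bump function\<close>

definition flat_exp :: "nat \<Rightarrow> real \<Rightarrow> real" where
  "flat_exp k t = (if t \<le> 0 then 0 else (1 / t) ^ k * exp (- 1 / t))"

lemma flat_exp_tendsto_0: "(flat_exp k \<longlongrightarrow> 0) (at 0)"
proof -
  have "\<forall>\<^sub>F t in at_left 0. flat_exp k t = 0"
    by (auto simp: flat_exp_def eventually_at_filter)
  then have left: "(flat_exp k \<longlongrightarrow> 0) (at_left 0)"
    by (rule tendsto_eventually)
  have "((\<lambda>u. u ^ k / exp u) \<longlongrightarrow> (0::real)) at_top"
    by (rule tendsto_power_div_exp_0)
  then have "((\<lambda>t. inverse t ^ k / exp (inverse t)) \<longlongrightarrow> (0::real)) (at_right 0)"
    using filterlim_compose filterlim_inverse_at_top_right by blast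
  moreover have "\<forall>\<^sub>F t in at_right 0. t > (0::real)"
    by (simp add: eventually_at_filter)
  then have "\<forall>\<^sub>F t in at_right 0. inverse t ^ k / exp (inverse t) = flat_exp k t"
    by eventually_elim (auto simp: flat_exp_def exp_minus field_simps)
  ultimately have right: "(flat_exp k \<longlongrightarrow> 0) (at_right 0)"
    by (simp add: tendsto_cong)
  show ?thesis
    using left right filterlim_at_split by blast
qed

lemma flat_exp_has_real_derivative:
  "(flat_exp k has_real_derivative - real k * flat_exp (Suc k) t + flat_exp (Suc (Suc k)) t) (at t)"
proof (cases t "0::real" rule: linorder_cases)
  case less
  have "((\<lambda>_. 0) has_real_derivative 0) (at t)"
    by simp
  then have "(flat_exp k has_real_derivative 0) (at t)"
    by (rule has_field_derivative_transform_within_open[of _ _ t "{..<0}"])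
       (use less in \<open>auto simp: flat_exp_def\<close>)
  then show ?thesis
    using less by (simp add: flat_exp_def)
next
  case equal
  have "\<forall>\<^sub>F s in at 0. flat_exp (Suc k) s = (flat_exp k s - flat_exp k 0) / (s - 0)"
    by (auto simp: flat_exp_def eventually_at_filter field_simps)
  then have "((\<lambda>s. (flat_exp k s - flat_exp k 0) / (s - 0)) \<longlongrightarrow> 0) (at 0)"
    using tendsto_cong flat_exp_tendsto_0 by fastforce
  then show ?thesis
    using equal by (simp add: has_field_derivative_iff flat_exp_def)
next
  case greater
  have "((\<lambda>t. (1 / t) ^ k * exp (- 1 / t)) has_real_derivative
      - real k * ((1 / t) ^ Suc k * exp (- 1 / t)) + (1 / t) ^ Suc (Suc k) * exp (- 1 / t)) (at t)"
    using greater
    apply (auto intro!: derivative_eq_intros)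
    apply (cases k)
     apply (auto simp: field_simps)
    done
  then have "(flat_exp k has_real_derivative
      - real k * ((1 / t) ^ Suc k * exp (- 1 / t)) + (1 / t) ^ Suc (Suc k) * exp (- 1 / t)) (at t)"
    by (rule has_field_derivative_transform_within_open[of _ _ t "{0<..}"])
       (use greater in \<open>auto simp: flat_exp_def\<close>)
  then show ?thesis
    using greater by (simp add: flat_exp_def)
qed

inductive flat_exp_comb :: "(real \<Rightarrow> real) \<Rightarrow> bool" where
  "flat_exp_comb (\<lambda>t. c * flat_exp k t)"
| "flat_exp_comb f \<Longrightarrow> flat_exp_comb g \<Longrightarrow> flat_exp_comb (\<lambda>t. f t + g t)"

lemma flat_exp_comb_has_derivative:
  "flat_exp_comb f \<Longrightarrow> \<exists>f'. flat_exp_comb f' \<and> (\<forall>t. (f has_real_derivative f' t) (at t))"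
proof (induction rule: flat_exp_comb.induct)
  case (1 c k)
  let ?f' = "\<lambda>t. (c * - real k) * flat_exp (Suc k) t + c * flat_exp (Suc (Suc k)) t"
  have "flat_exp_comb ?f'"
    by (intro flat_exp_comb.intros)
  moreover have "((\<lambda>t. c * flat_exp k t) has_real_derivative ?f' t) (at t)" for t
    using DERIV_cmult[OF flat_exp_has_real_derivative, of c k] by (simp add: algebra_simps)
  ultimately show ?case by blast
next
  case (2 f g)
  then obtain f' g' where "flat_exp_comb f'" "flat_exp_comb g'"
    "\<forall>t. (f has_real_derivative f' t) (at t)" "\<forall>t. (g has_real_derivative g' t) (at t)"
    by blast
  then show ?case
    by (intro exI[of _ "\<lambda>t. f' t + g' t"]) (auto intro: flat_exp_comb.intros DERIV_add)
qed

lemma flat_exp_comb_C_inf_on_UNIV: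
  assumes "flat_exp_comb f"
  shows "C_inf_on UNIV f"
proof -
  have "flat_exp_comb (Dn n f)" for n
  proof (induction n)
    case (Suc n)
    then obtain f' where f': "flat_exp_comb f'" "\<forall>t. (Dn n f has_real_derivative f' t) (at t)"
      using flat_exp_comb_has_derivative by blast
    then have "deriv (Dn n f) = f'"
      by (intro ext DERIV_imp_deriv) blast
    then show ?case
      using f'(1) by simp
  qed (simp add: assms)
  then show ?thesis
    unfolding C_inf_on_def using flat_exp_comb_has_derivative real_differentiable_def by blast
qed

definition bump :: "real \<Rightarrow> real \<Rightarrow> real \<Rightarrow> real" where
  "bump a b t = flat_exp 0 (t - a) * flat_exp 0 (b - t)"

lemma C_inf_on_UNIV_bump: "C_inf_on UNIV (bump a b)"
proof -
  have "C_inf_on UNIV (flat_exp 0)"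
    using flat_exp_comb_C_inf_on_UNIV[OF flat_exp_comb.intros(1)[of 1 0]] by simp
  then have "C_inf_on UNIV (\<lambda>t. flat_exp 0 (1 * t + - a) * flat_exp 0 ((- 1) * t + b))"
    by (intro C_inf_on_UNIV_mult C_inf_on_UNIV_affine)
  then show ?thesis
    unfolding bump_def by simp
qed

lemma bump_pos: "a < t \<Longrightarrow> t < b \<Longrightarrow> bump a b t > 0"
  by (simp add: bump_def flat_exp_def)

lemma bump_eq_0: "t \<notin> {a<..<b} \<Longrightarrow> bump a b t = 0"
  by (auto simp: bump_def flat_exp_def)

lemma admissible_var_bump:
  "a < b \<Longrightarrow> a \<in> I \<Longrightarrow> b \<in> I \<Longrightarrow> admissible_var I (\<lambda>t. c1 * bump a b t) (\<lambda>t. c2 * bump a b t) a b"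
  unfolding admissible_var_def
proof (intro conjI ballI impI)
  have "C_inf_on UNIV (\<lambda>t. c * bump a b t)" for c
    by (intro C_inf_on_UNIV_mult C_inf_on_UNIV_const C_inf_on_UNIV_bump)
  then show "C_inf_on I (\<lambda>t. c1 * bump a b t)" "C_inf_on I (\<lambda>t. c2 * bump a b t)"
    using C_inf_on_subset by blast+
qed (auto simp: bump_eq_0)

lemma bump_integral_pos:
  fixes w :: "real \<Rightarrow> real"
  assumes "open I" "s \<in> I" "continuous_on I w" "w s > 0"
  obtains a b where "a < b" "a \<in> I" "b \<in> I" "{a..b} \<subseteq> I" "integral {a..b} (\<lambda>t. bump a b t * w t) > 0"
proof -
  obtain r where r: "r > 0" "cball s r \<subseteq> I" "\<And>t. t \<in> cball s r \<Longrightarrow> w t > 0"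
  proof -
    obtain d where d: "d > 0" "\<And>t. t \<in> I \<Longrightarrow> dist t s < d \<Longrightarrow> dist (w t) (w s) < w s"
      using assms(2-4) unfolding continuous_on_iff by blast
    obtain \<epsilon> where \<epsilon>: "\<epsilon> > 0" "ball s \<epsilon> \<subseteq> I"
      using assms(1,2) open_contains_ball by blast
    show thesis
    proof
      show "min d \<epsilon> / 2 > 0"
        using d \<epsilon> by simp
      show sub: "cball s (min d \<epsilon> / 2) \<subseteq> I"
        using \<epsilon> d by (auto simp: subset_iff dist_commute)
      fix t
      assume t: "t \<in> cball s (min d \<epsilon> / 2)"
      then have "dist (w t) (w s) < w s"
        using d sub by (intro d(2)) (auto simp: dist_commute)
      then show "w t > 0"
        by (auto simp: dist_real_def)
    qed
  qed
  show thesis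
  proof
    have sub: "{s - r..s + r} \<subseteq> I"
      using r(2) by (auto simp: subset_iff dist_real_def)
    then show "s - r \<in> I" "s + r \<in> I" "{s - r..s + r} \<subseteq> I" "s - r < s + r"
      using r(1) by auto
    have "continuous_on UNIV (bump (s - r) (s + r))"
      using C_inf_on_continuous_on[OF C_inf_on_UNIV_bump, of 0] by simp
    then have bump: "continuous_on {s - r..s + r} (bump (s - r) (s + r))"
      by (rule continuous_on_subset) simp
    then have "integral {s - r..s + r} (\<lambda>_. 0) < integral {s - r..s + r} (\<lambda>t. bump (s - r) (s + r) t * w t)"
      using bump continuous_on_subset[OF assms(3) sub] r(1,3) bump_pos
      by (intro integral_less_real continuous_on_mult continuous_on_const)
         (auto simp: dist_real_def)
    then show "integral {s - r..s + r} (\<lambda>t. bump (s - r) (s + r) t * w t) > 0"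
      by simp
  qed
qed

section \<open>Curves parametrised by equi-affine arc length\<close>

definition curve_det ::
  "(real \<Rightarrow> real) \<Rightarrow> (real \<Rightarrow> real) \<Rightarrow> (real \<Rightarrow> real) \<Rightarrow> (real \<Rightarrow> real) \<Rightarrow> nat \<Rightarrow> nat \<Rightarrow> real \<Rightarrow> real"
  where "curve_det x y u v i j t = det2 (Dn i x t) (Dn i y t) (Dn j u t) (Dn j v t)"

abbreviation self_det :: "(real \<Rightarrow> real) \<Rightarrow> (real \<Rightarrow> real) \<Rightarrow> nat \<Rightarrow> nat \<Rightarrow> real \<Rightarrow> real" where
  "self_det x y \<equiv> curve_det x y x y"

lemma self_det_same [simp]: "self_det x y i i t = 0"
  by (simp add: curve_det_def det2_def)

lemma curve_det_has_real_derivative: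
  assumes "C_inf_on I x" "C_inf_on I y" "C_inf_on I u" "C_inf_on I v" "t \<in> I"
  shows "(curve_det x y u v i j has_real_derivative
          curve_det x y u v (Suc i) j t + curve_det x y u v i (Suc j) t) (at t)"
  unfolding curve_det_def[abs_def] det2_def
  by (auto intro!: derivative_eq_intros C_inf_on_has_real_derivative[OF _ assms(5)] assms(1-4)
      simp: algebra_simps)

lemma continuous_on_curve_det:
  "C_inf_on I x \<Longrightarrow> C_inf_on I y \<Longrightarrow> C_inf_on I u \<Longrightarrow> C_inf_on I v \<Longrightarrow>
    continuous_on I (curve_det x y u v i j)"
  unfolding curve_det_def[abs_def] det2_def by (intro continuous_intros C_inf_on_continuous_on)

definition kappa :: "(real \<Rightarrow> real) \<Rightarrow> (real \<Rightarrow> real) \<Rightarrow> real \<Rightarrow> real" where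
  "kappa x y t = self_det x y 2 3 t"

definition kappa_s :: "(real \<Rightarrow> real) \<Rightarrow> (real \<Rightarrow> real) \<Rightarrow> real \<Rightarrow> real" where
  "kappa_s x y t = self_det x y 2 4 t"

definition kappa_ss :: "(real \<Rightarrow> real) \<Rightarrow> (real \<Rightarrow> real) \<Rightarrow> real \<Rightarrow> real" where
  "kappa_ss x y t = self_det x y 3 4 t + self_det x y 2 5 t"

locale ea_arc_length_curve =
  fixes I :: "real set" and x y :: "real \<Rightarrow> real"
  assumes open_I: "open I" and interval_I: "is_interval I"
    and smooth_x: "C_inf_on I x" and smooth_y: "C_inf_on I y"
    and unimodular: "\<And>t. t \<in> I \<Longrightarrow> self_det x y 1 2 t = 1"
begin

lemma self_det_has_real_derivative:
  "t \<in> I \<Longrightarrow> (self_det x y i j has_real_derivative self_det x y (Suc i) j t + self_det x y i (Suc j) t) (at t)"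
  by (rule curve_det_has_real_derivative[OF smooth_x smooth_y smooth_x smooth_y])

lemma self_det_1_3: "t \<in> I \<Longrightarrow> self_det x y 1 3 t = 0"
  using DERIV_zero_if_const_on_open[OF open_I _ unimodular self_det_has_real_derivative]
  by (simp add: numeral_eq_Suc)

lemma self_det_1_4: "t \<in> I \<Longrightarrow> self_det x y 1 4 t = - self_det x y 2 3 t"
  using DERIV_zero_if_const_on_open[OF open_I _ self_det_1_3 self_det_has_real_derivative]
  by (simp add: numeral_eq_Suc eq_neg_iff_add_eq_0 add.commute)

lemma Dn_3_eq:
  assumes "t \<in> I"
  shows "Dn 3 x t = - kappa x y t * Dn 1 x t" "Dn 3 y t = - kappa x y t * Dn 1 y t"
proof -
  have "det2 (Dn 1 x t) (Dn 1 y t) (Dn 2 x t) (Dn 2 y t) = 1"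
    "det2 (Dn 1 x t) (Dn 1 y t) (Dn 3 x t) (Dn 3 y t) = 0"
    using unimodular[OF assms] self_det_1_3[OF assms] by (simp_all add: curve_det_def)
  then show "Dn 3 x t = - kappa x y t * Dn 1 x t" "Dn 3 y t = - kappa x y t * Dn 1 y t"
    unfolding kappa_def curve_det_def det2_def by algebra+
qed

lemma ea_kappa_eq: "t \<in> I \<Longrightarrow> ea_kappa x y t = kappa x y t"
  unfolding ea_kappa_def
proof (rule the_equality)
  assume t: "t \<in> I"
  then show "(deriv ^^ 3) x t = - kappa x y t * deriv x t \<and> (deriv ^^ 3) y t = - kappa x y t * deriv y t"
    using Dn_3_eq by simp
  fix k
  assume "(deriv ^^ 3) x t = - k * deriv x t \<and> (deriv ^^ 3) y t = - k * deriv y t"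
  moreover have "det2 (Dn 1 x t) (Dn 1 y t) (Dn 2 x t) (Dn 2 y t) = 1"
    using unimodular[OF t] by (simp add: curve_det_def)
  ultimately show "k = kappa x y t"
    unfolding kappa_def curve_det_def det2_def by simp algebra
qed

lemma kappa_has_real_derivative: "t \<in> I \<Longrightarrow> (kappa x y has_real_derivative kappa_s x y t) (at t)"
  using self_det_has_real_derivative[of t 2 3]
  unfolding kappa_def[abs_def] kappa_s_def by (simp add: numeral_eq_Suc)

lemma kappa_s_has_real_derivative: "t \<in> I \<Longrightarrow> (kappa_s x y has_real_derivative kappa_ss x y t) (at t)"
  using self_det_has_real_derivative[of t 2 4]
  unfolding kappa_s_def[abs_def] kappa_ss_def by (simp add: numeral_eq_Suc)

lemma Dn_has_real_derivative:
  assumes "t \<in> I"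
  shows "(Dn n x has_real_derivative Dn (Suc n) x t) (at t)"
    "(Dn n y has_real_derivative Dn (Suc n) y t) (at t)"
  using C_inf_on_has_real_derivative[OF smooth_x assms] C_inf_on_has_real_derivative[OF smooth_y assms]
  by blast+

lemma Dn_4_5_eq:
  assumes t: "t \<in> I"
  shows "Dn 4 x t = - kappa_s x y t * Dn 1 x t - kappa x y t * Dn 2 x t"
    "Dn 4 y t = - kappa_s x y t * Dn 1 y t - kappa x y t * Dn 2 y t"
    "Dn 5 x t = (kappa x y t ^ 2 - kappa_ss x y t) * Dn 1 x t - 2 * kappa_s x y t * Dn 2 x t"
    "Dn 5 y t = (kappa x y t ^ 2 - kappa_ss x y t) * Dn 1 y t - 2 * kappa_s x y t * Dn 2 y t"
proof -
  have frenet: "Dn 4 z t = - kappa_s x y t * Dn 1 z t - kappa x y t * Dn 2 z t \<and>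
      Dn 5 z t = (kappa x y t ^ 2 - kappa_ss x y t) * Dn 1 z t - 2 * kappa_s x y t * Dn 2 z t"
    if dz: "\<And>n s. s \<in> I \<Longrightarrow> (Dn n z has_real_derivative Dn (Suc n) z s) (at s)"
      and z3: "\<And>s. s \<in> I \<Longrightarrow> Dn 3 z s = - kappa x y s * Dn 1 z s" for z
  proof -
    have d3: "((\<lambda>s. Dn 3 z s + kappa x y s * Dn 1 z s) has_real_derivative
        Dn 4 z s + (kappa_s x y s * Dn 1 z s + Dn 2 z s * kappa x y s)) (at s)" if s: "s \<in> I" for s
      using DERIV_add[OF dz[of s 3] DERIV_mult[OF kappa_has_real_derivative dz[of s 1]], OF s s s]
      by (simp add: numeral_eq_Suc)
    have z4: "Dn 4 z s = - kappa_s x y s * Dn 1 z s - kappa x y s * Dn 2 z s" if s: "s \<in> I" for s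
      using DERIV_zero_if_const_on_open[OF open_I s _ d3[OF s], of 0] z3
      by (simp add: algebra_simps)
    have "((\<lambda>s. Dn 4 z s + kappa_s x y s * Dn 1 z s + kappa x y s * Dn 2 z s) has_real_derivative
        Dn 5 z t + (kappa_ss x y t * Dn 1 z t + Dn 2 z t * kappa_s x y t)
          + (kappa_s x y t * Dn 2 z t + Dn 3 z t * kappa x y t)) (at t)"
      using DERIV_add[OF DERIV_add[OF dz[of t 4] DERIV_mult[OF kappa_s_has_real_derivative dz[of t 1]]]
          DERIV_mult[OF kappa_has_real_derivative dz[of t 2]], OF t t t t t]
      by (simp add: numeral_eq_Suc)
    from DERIV_zero_if_const_on_open[OF open_I t _ this, of 0]
    have "Dn 5 z t = - kappa_ss x y t * Dn 1 z t - 2 * kappa_s x y t * Dn 2 z t - kappa x y t * Dn 3 z t"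
      using z4 by (simp add: algebra_simps)
    then show ?thesis
      using z4[OF t] z3[OF t] by (simp add: algebra_simps power2_eq_square)
  qed
  show "Dn 4 x t = - kappa_s x y t * Dn 1 x t - kappa x y t * Dn 2 x t"
    "Dn 5 x t = (kappa x y t ^ 2 - kappa_ss x y t) * Dn 1 x t - 2 * kappa_s x y t * Dn 2 x t"
    using frenet[OF Dn_has_real_derivative(1) Dn_3_eq(1)] by blast+
  show "Dn 4 y t = - kappa_s x y t * Dn 1 y t - kappa x y t * Dn 2 y t"
    "Dn 5 y t = (kappa x y t ^ 2 - kappa_ss x y t) * Dn 1 y t - 2 * kappa_s x y t * Dn 2 y t"
    using frenet[OF Dn_has_real_derivative(2) Dn_3_eq(2)] by blast+
qed

end

section \<open>Equi-affine curvature in an arbitrary parametrisation\<close>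

lemma DERIV_divide_power_logderiv:
  fixes N \<sigma> :: "real \<Rightarrow> real"
  assumes "(N has_real_derivative N') (at t)" "(\<sigma> has_real_derivative \<sigma> t * r) (at t)" "\<sigma> t \<noteq> 0"
  shows "((\<lambda>s. N s / \<sigma> s ^ k) has_real_derivative (N' - real k * N t * r) / \<sigma> t ^ k) (at t)"
proof -
  have "((\<lambda>s. N s / \<sigma> s ^ k) has_real_derivative
      (N' * \<sigma> t ^ k - N t * (real k * \<sigma> t ^ (k - 1) * (\<sigma> t * r))) / (\<sigma> t ^ k * \<sigma> t ^ k)) (at t)"
    using assms by (auto intro!: derivative_eq_intros)
  moreover have "(N' * \<sigma> t ^ k - N t * (real k * \<sigma> t ^ (k - 1) * (\<sigma> t * r))) / (\<sigma> t ^ k * \<sigma> t ^ k)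
      = (N' - real k * N t * r) / \<sigma> t ^ k"
    using assms(3) by (cases k) (simp_all add: field_simps)
  ultimately show ?thesis
    by simp
qed

lemma DERIV_cube_root_logderiv:
  fixes P :: "real \<Rightarrow> real"
  assumes "(P has_real_derivative P') (at t)" "P t > 0"
  shows "((\<lambda>s. P s powr (1/3)) has_real_derivative P t powr (1/3) * (P' / (3 * P t))) (at t)"
  using DERIV_powr[OF assms DERIV_const, of "1/3"] by simp

text \<open>
  With \<open>A = |c'', c'''|\<close>, \<open>P = |c', c''| > 0\<close> and \<open>P'\<close>, \<open>P''\<close> the derivatives of \<open>P\<close>, this
  is \<open>\<kappa> ds/dt\<close> for a curve \<open>c\<close> in an arbitrary parametrisation (\<open>ds/dt = P\<^sup>1\<^sup>/\<^sup>3\<close>).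
\<close>
definition curv_density :: "real \<Rightarrow> real \<Rightarrow> real \<Rightarrow> real \<Rightarrow> real" where
  "curv_density A P P' P'' = ((A + P'' / 3) / P - 5/9 * P'^2 / P^2) / P powr (1/3)"

lemma ea_D_iterates:
  fixes X Y Z Z1 Z2 Z3 \<sigma> r r' :: "real \<Rightarrow> real"
  assumes S: "open S"
    and dZ: "\<And>t. t \<in> S \<Longrightarrow> (Z has_real_derivative Z1 t) (at t)"
      "\<And>t. t \<in> S \<Longrightarrow> (Z1 has_real_derivative Z2 t) (at t)"
      "\<And>t. t \<in> S \<Longrightarrow> (Z2 has_real_derivative Z3 t) (at t)"
    and \<sigma>_pos: "\<And>t. t \<in> S \<Longrightarrow> \<sigma> t > 0"
    and d\<sigma>: "\<And>t. t \<in> S \<Longrightarrow> (\<sigma> has_real_derivative \<sigma> t * r t) (at t)"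
    and dr: "\<And>t. t \<in> S \<Longrightarrow> (r has_real_derivative r' t) (at t)"
    and speed: "\<And>t. t \<in> S \<Longrightarrow> ea_speed X Y t = \<sigma> t"
    and t: "t \<in> S"
  shows "ea_D X Y (ea_D X Y Z) t = (Z2 t - Z1 t * r t) / \<sigma> t ^ 2"
    "ea_D X Y (ea_D X Y (ea_D X Y Z)) t =
       (Z3 t - 3 * Z2 t * r t - Z1 t * r' t + 2 * Z1 t * r t ^ 2) / \<sigma> t ^ 3"
proof -
  have D1: "ea_D X Y Z s = Z1 s / \<sigma> s ^ 1" if "s \<in> S" for s
    using that speed DERIV_imp_deriv[OF dZ(1)] by (simp add: ea_D_def)
  have D2: "ea_D X Y (ea_D X Y Z) s = (Z2 s - Z1 s * r s) / \<sigma> s ^ 2" if s: "s \<in> S" for s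
  proof -
    have "((\<lambda>s. Z1 s / \<sigma> s ^ 1) has_real_derivative (Z2 s - real 1 * Z1 s * r s) / \<sigma> s ^ 1) (at s)"
      by (rule DERIV_divide_power_logderiv[OF dZ(2)[OF s] d\<sigma>[OF s]]) (use \<sigma>_pos[OF s] in auto)
    from deriv_eq_if_eq_on_open[OF S s D1 this] show ?thesis
      using speed[OF s] \<sigma>_pos[OF s] by (simp add: ea_D_def power2_eq_square)
  qed
  then show "ea_D X Y (ea_D X Y Z) t = (Z2 t - Z1 t * r t) / \<sigma> t ^ 2"
    using t .
  have "((\<lambda>s. Z2 s - Z1 s * r s) has_real_derivative Z3 t - (Z2 t * r t + Z1 t * r' t)) (at t)"
    using t by (auto intro!: derivative_eq_intros dZ dr)
  then have "((\<lambda>s. (Z2 s - Z1 s * r s) / \<sigma> s ^ 2) has_real_derivative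
      (Z3 t - (Z2 t * r t + Z1 t * r' t) - real 2 * (Z2 t - Z1 t * r t) * r t) / \<sigma> t ^ 2) (at t)"
    by (rule DERIV_divide_power_logderiv[OF _ d\<sigma>[OF t]]) (use \<sigma>_pos[OF t] in auto)
  from deriv_eq_if_eq_on_open[OF S t D2 this]
  show "ea_D X Y (ea_D X Y (ea_D X Y Z)) t =
      (Z3 t - 3 * Z2 t * r t - Z1 t * r' t + 2 * Z1 t * r t ^ 2) / \<sigma> t ^ 3"
    using speed[OF t] \<sigma>_pos[OF t]
    by (simp add: ea_D_def field_simps power2_eq_square power3_eq_cube)
qed

lemma curv_density_reparam:
  fixes X1 X2 X3 X4 Y1 Y2 Y3 Y4 P P' P'' r r' \<sigma> :: real
  assumes P_def: "P = X1 * Y2 - Y1 * X2" and P'_def: "P' = X1 * Y3 - Y1 * X3"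
    and P''_def: "P'' = X2 * Y3 + X1 * Y4 - Y2 * X3 - Y1 * X4"
    and r_def: "r = P' / (3 * P)" and r'_def: "r' = (P'' * P - P'^2) / (3 * P^2)"
    and P: "P > 0" and \<sigma>: "\<sigma> = P powr (1/3)"
  shows "det2 ((X2 - X1 * r) / \<sigma> ^ 2) ((Y2 - Y1 * r) / \<sigma> ^ 2)
           ((X3 - 3 * X2 * r - X1 * r' + 2 * X1 * r ^ 2) / \<sigma> ^ 3)
           ((Y3 - 3 * Y2 * r - Y1 * r' + 2 * Y1 * r ^ 2) / \<sigma> ^ 3) * \<sigma>
       = curv_density (X2 * Y3 - Y2 * X3) P P' P''"
proof -
  have \<sigma>_pos: "\<sigma> > 0"
    using P \<sigma> by simp
  have \<sigma>3: "\<sigma> ^ 3 = P"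
    using P \<sigma> by (simp add: powr_realpow[symmetric] powr_powr)
  have scale: "det2 (a / \<sigma> ^ 2) (b / \<sigma> ^ 2) (c / \<sigma> ^ 3) (d / \<sigma> ^ 3) * \<sigma> = det2 a b c d / (P * \<sigma>)"
    for a b c d
  proof -
    have "\<sigma> ^ 2 * \<sigma> ^ 3 = (P * \<sigma>) * \<sigma>"
      using \<sigma>3 by (simp add: power2_eq_square power3_eq_cube algebra_simps)
    then show ?thesis
      using \<sigma>_pos P by (simp add: det2_def divide_simps)
  qed
  have numerator: "det2 (X2 - X1 * r) (Y2 - Y1 * r) (X3 - 3 * X2 * r - X1 * r' + 2 * X1 * r ^ 2)
      (Y3 - 3 * Y2 * r - Y1 * r' + 2 * Y1 * r ^ 2)
    = (X2 * Y3 - Y2 * X3) + P * (r' + r ^ 2) - r * P'"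
    by (simp add: det2_def P_def P'_def algebra_simps power2_eq_square)
  have "((X2 * Y3 - Y2 * X3) + P * (r' + r ^ 2) - r * P') / (P * \<sigma>)
      = curv_density (X2 * Y3 - Y2 * X3) P P' P''"
    using P \<sigma>_pos
    by (simp add: curv_density_def \<sigma>[symmetric] r_def r'_def field_simps power2_eq_square)
  then show ?thesis
    unfolding scale numerator .
qed

lemma ea_speed_eq:
  assumes S: "open S"
    and dX: "\<And>t. t \<in> S \<Longrightarrow> (X has_real_derivative X1 t) (at t)"
      "\<And>t. t \<in> S \<Longrightarrow> (X1 has_real_derivative X2 t) (at t)"
    and dY: "\<And>t. t \<in> S \<Longrightarrow> (Y has_real_derivative Y1 t) (at t)"
      "\<And>t. t \<in> S \<Longrightarrow> (Y1 has_real_derivative Y2 t) (at t)"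
    and s: "s \<in> S"
  shows "ea_speed X Y s = det2 (X1 s) (Y1 s) (X2 s) (Y2 s) powr (1/3)"
proof -
  have "deriv X s = X1 s" "deriv Y s = Y1 s"
    using dX(1)[OF s] dY(1)[OF s] by (simp_all add: DERIV_imp_deriv)
  moreover have "deriv (deriv X) s = X2 s" "deriv (deriv Y) s = Y2 s"
    by (rule deriv_eq_if_eq_on_open[OF S s _ dX(2)[OF s]], use dX(1) DERIV_imp_deriv in blast)
       (rule deriv_eq_if_eq_on_open[OF S s _ dY(2)[OF s]], use dY(1) DERIV_imp_deriv in blast)
  ultimately show ?thesis
    by (simp add: ea_speed_def)
qed

lemma ea_curv_gen_mult_speed:
  fixes X Y X1 X2 X3 X4 Y1 Y2 Y3 Y4 :: "real \<Rightarrow> real"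
  assumes S: "open S"
    and dX: "\<And>t. t \<in> S \<Longrightarrow> (X has_real_derivative X1 t) (at t)"
      "\<And>t. t \<in> S \<Longrightarrow> (X1 has_real_derivative X2 t) (at t)"
      "\<And>t. t \<in> S \<Longrightarrow> (X2 has_real_derivative X3 t) (at t)"
      "\<And>t. t \<in> S \<Longrightarrow> (X3 has_real_derivative X4 t) (at t)"
    and dY: "\<And>t. t \<in> S \<Longrightarrow> (Y has_real_derivative Y1 t) (at t)"
      "\<And>t. t \<in> S \<Longrightarrow> (Y1 has_real_derivative Y2 t) (at t)"
      "\<And>t. t \<in> S \<Longrightarrow> (Y2 has_real_derivative Y3 t) (at t)"
      "\<And>t. t \<in> S \<Longrightarrow> (Y3 has_real_derivative Y4 t) (at t)"
    and pos: "\<And>t. t \<in> S \<Longrightarrow> det2 (X1 t) (Y1 t) (X2 t) (Y2 t) > 0"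
    and t: "t \<in> S"
  shows "ea_curv_gen X Y t * ea_speed X Y t =
         curv_density (det2 (X2 t) (Y2 t) (X3 t) (Y3 t)) (det2 (X1 t) (Y1 t) (X2 t) (Y2 t))
           (det2 (X1 t) (Y1 t) (X3 t) (Y3 t))
           (det2 (X2 t) (Y2 t) (X3 t) (Y3 t) + det2 (X1 t) (Y1 t) (X4 t) (Y4 t))"
proof -
  define P where "P s = X1 s * Y2 s - Y1 s * X2 s" for s
  define P' where "P' s = X1 s * Y3 s - Y1 s * X3 s" for s
  define P'' where "P'' s = X2 s * Y3 s + X1 s * Y4 s - Y2 s * X3 s - Y1 s * X4 s" for s
  define \<sigma> where "\<sigma> s = P s powr (1/3)" for s
  define r where "r s = P' s / (3 * P s)" for s
  define r' where "r' s = (P'' s * P s - P' s ^ 2) / (3 * P s ^ 2)" for s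
  have P_pos: "P s > 0" if "s \<in> S" for s
    using pos that by (simp add: P_def det2_def)
  have dP: "(P has_real_derivative P' s) (at s)" "(P' has_real_derivative P'' s) (at s)"
    if s: "s \<in> S" for s
    unfolding P_def[abs_def] P'_def[abs_def] P''_def
    by (auto intro!: derivative_eq_intros dX dY s simp: algebra_simps)
  have d\<sigma>: "(\<sigma> has_real_derivative \<sigma> s * r s) (at s)" if s: "s \<in> S" for s
    using DERIV_cube_root_logderiv[OF dP(1)[OF s] P_pos[OF s]] unfolding \<sigma>_def[abs_def] r_def
    by simp
  have dr: "(r has_real_derivative r' s) (at s)" if s: "s \<in> S" for s
  proof -
    have "(r has_real_derivative (P'' s * (3 * P s) - P' s * (3 * P' s)) / (3 * P s * (3 * P s))) (at s)"
      unfolding r_def[abs_def] using P_pos[OF s]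
      by (auto intro!: derivative_eq_intros dP s)
    moreover have "(P'' s * (3 * P s) - P' s * (3 * P' s)) / (3 * P s * (3 * P s)) = r' s"
      using P_pos[OF s] unfolding r'_def by (simp add: divide_simps power2_eq_square)
    ultimately show ?thesis
      by simp
  qed
  have speed: "ea_speed X Y s = \<sigma> s" if "s \<in> S" for s
    using ea_speed_eq[OF S dX(1,2) dY(1,2) that] by (simp add: \<sigma>_def P_def det2_def)
  have \<sigma>_pos: "\<sigma> s > 0" if "s \<in> S" for s
    using P_pos[OF that] by (simp add: \<sigma>_def)
  note Dx = ea_D_iterates[OF S dX(1-3) \<sigma>_pos d\<sigma> dr speed t]
    and Dy = ea_D_iterates[OF S dY(1-3) \<sigma>_pos d\<sigma> dr speed t]
  have "ea_curv_gen X Y t * ea_speed X Y t =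
      det2 ((X2 t - X1 t * r t) / \<sigma> t ^ 2) ((Y2 t - Y1 t * r t) / \<sigma> t ^ 2)
        ((X3 t - 3 * X2 t * r t - X1 t * r' t + 2 * X1 t * r t ^ 2) / \<sigma> t ^ 3)
        ((Y3 t - 3 * Y2 t * r t - Y1 t * r' t + 2 * Y1 t * r t ^ 2) / \<sigma> t ^ 3) * \<sigma> t"
    unfolding ea_curv_gen_def speed[OF t] using Dx Dy by simp
  also have "\<dots> = curv_density (X2 t * Y3 t - Y2 t * X3 t) (P t) (P' t) (P'' t)"
    by (rule curv_density_reparam) (use P_pos[OF t] in \<open>simp_all add: P_def P'_def P''_def r_def r'_def \<sigma>_def\<close>)
  finally show ?thesis
    by (simp add: P_def P'_def P''_def det2_def algebra_simps)
qed

definition curv_density_deriv :: "real \<Rightarrow> real \<Rightarrow> real \<Rightarrow> real \<Rightarrow> real \<Rightarrow> real \<Rightarrow> real \<Rightarrow> real \<Rightarrow> real"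
  where "curv_density_deriv A P P' P'' dA dP dP' dP'' =
    (((dA + dP'' / 3) / P - (A + P'' / 3) * dP / P^2 - 5/9 * (2 * P' * dP' / P^2 - 2 * P'^2 * dP / P^3))
      - ((A + P'' / 3) / P - 5/9 * P'^2 / P^2) * (dP / (3 * P))) / P powr (1/3)"

lemma curv_density_has_real_derivative:
  fixes A P P' P'' :: "real \<Rightarrow> real"
  assumes "(A has_real_derivative dA) (at e)" "(P has_real_derivative dP) (at e)"
    "(P' has_real_derivative dP') (at e)" "(P'' has_real_derivative dP'') (at e)" "P e > 0"
  shows "((\<lambda>e. curv_density (A e) (P e) (P' e) (P'' e)) has_real_derivative
          curv_density_deriv (A e) (P e) (P' e) (P'' e) dA dP dP' dP'') (at e)"
proof -
  define N where "N e = (A e + P'' e / 3) / P e - 5/9 * P' e ^ 2 / P e ^ 2" for e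
  have dN: "(N has_real_derivative (dA + dP'' / 3) / P e - (A e + P'' e / 3) * dP / P e ^ 2
      - 5/9 * (2 * P' e * dP' / P e ^ 2 - 2 * P' e ^ 2 * dP / P e ^ 3)) (at e)"
    unfolding N_def[abs_def] using assms
    by (auto intro!: derivative_eq_intros simp: field_simps power2_eq_square power3_eq_cube)
  have "((\<lambda>s. N s / (P s powr (1/3)) ^ 1) has_real_derivative
      ((dA + dP'' / 3) / P e - (A e + P'' e / 3) * dP / P e ^ 2
        - 5/9 * (2 * P' e * dP' / P e ^ 2 - 2 * P' e ^ 2 * dP / P e ^ 3)
       - real 1 * N e * (dP / (3 * P e))) / (P e powr (1/3)) ^ 1) (at e)"
    by (rule DERIV_divide_power_logderiv[OF dN DERIV_cube_root_logderiv]) (use assms in auto)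
  then show ?thesis
    by (simp add: curv_density_def curv_density_deriv_def N_def)
qed

lemma continuous_on_curv_density_deriv:
  assumes "continuous_on S A" "continuous_on S P" "continuous_on S P'" "continuous_on S P''"
    "continuous_on S dA" "continuous_on S dP" "continuous_on S dP'" "continuous_on S dP''"
    "\<And>z. z \<in> S \<Longrightarrow> P z > 0"
  shows "continuous_on S (\<lambda>z. curv_density_deriv (A z) (P z) (P' z) (P'' z) (dA z) (dP z) (dP' z) (dP'' z))"
  unfolding curv_density_deriv_def using assms(9)
  by (intro continuous_intros assms(1-8)) (auto simp: less_le)

lemma continuous_on_curv_density:
  assumes "continuous_on S A" "continuous_on S P" "continuous_on S P'" "continuous_on S P''"
    "\<And>z. z \<in> S \<Longrightarrow> P z > 0"
  shows "continuous_on S (\<lambda>z. curv_density (A z) (P z) (P' z) (P'' z))"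
  unfolding curv_density_def using assms(5)
  by (intro continuous_intros assms(1-4)) (auto simp: less_le)

section \<open>First variation of the total curvature\<close>

definition pert_det ::
  "(real \<Rightarrow> real) \<Rightarrow> (real \<Rightarrow> real) \<Rightarrow> (real \<Rightarrow> real) \<Rightarrow> (real \<Rightarrow> real) \<Rightarrow> nat \<Rightarrow> nat \<Rightarrow> real \<Rightarrow> real \<Rightarrow> real"
  where "pert_det x y v1 v2 i j e t =
    det2 (Dn i x t + e * Dn i v1 t) (Dn i y t + e * Dn i v2 t) (Dn j x t + e * Dn j v1 t) (Dn j y t + e * Dn j v2 t)"

definition pert_det_deriv ::
  "(real \<Rightarrow> real) \<Rightarrow> (real \<Rightarrow> real) \<Rightarrow> (real \<Rightarrow> real) \<Rightarrow> (real \<Rightarrow> real) \<Rightarrow> nat \<Rightarrow> nat \<Rightarrow> real \<Rightarrow> real \<Rightarrow> real"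
  where "pert_det_deriv x y v1 v2 i j e t =
    det2 (Dn i v1 t) (Dn i v2 t) (Dn j x t + e * Dn j v1 t) (Dn j y t + e * Dn j v2 t)
    + det2 (Dn i x t + e * Dn i v1 t) (Dn i y t + e * Dn i v2 t) (Dn j v1 t) (Dn j v2 t)"

definition pert_density ::
  "(real \<Rightarrow> real) \<Rightarrow> (real \<Rightarrow> real) \<Rightarrow> (real \<Rightarrow> real) \<Rightarrow> (real \<Rightarrow> real) \<Rightarrow> real \<Rightarrow> real \<Rightarrow> real"
  where "pert_density x y v1 v2 e t =
    curv_density (pert_det x y v1 v2 2 3 e t) (pert_det x y v1 v2 1 2 e t) (pert_det x y v1 v2 1 3 e t)
      (pert_det x y v1 v2 2 3 e t + pert_det x y v1 v2 1 4 e t)"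

definition pert_density_deriv ::
  "(real \<Rightarrow> real) \<Rightarrow> (real \<Rightarrow> real) \<Rightarrow> (real \<Rightarrow> real) \<Rightarrow> (real \<Rightarrow> real) \<Rightarrow> real \<Rightarrow> real \<Rightarrow> real"
  where "pert_density_deriv x y v1 v2 e t =
    curv_density_deriv (pert_det x y v1 v2 2 3 e t) (pert_det x y v1 v2 1 2 e t) (pert_det x y v1 v2 1 3 e t)
      (pert_det x y v1 v2 2 3 e t + pert_det x y v1 v2 1 4 e t)
      (pert_det_deriv x y v1 v2 2 3 e t) (pert_det_deriv x y v1 v2 1 2 e t) (pert_det_deriv x y v1 v2 1 3 e t)
      (pert_det_deriv x y v1 v2 2 3 e t + pert_det_deriv x y v1 v2 1 4 e t)"

lemma pert_det_has_real_derivative: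
  "((\<lambda>e. pert_det x y v1 v2 i j e t) has_real_derivative pert_det_deriv x y v1 v2 i j e t) (at e)"
  unfolding pert_det_def pert_det_deriv_def det2_def
  by (auto intro!: derivative_eq_intros simp: algebra_simps)

lemma pert_density_has_real_derivative:
  "pert_det x y v1 v2 1 2 e t > 0 \<Longrightarrow>
    ((\<lambda>e. pert_density x y v1 v2 e t) has_real_derivative pert_density_deriv x y v1 v2 e t) (at e)"
  unfolding pert_density_def pert_density_deriv_def
  by (intro curv_density_has_real_derivative DERIV_add pert_det_has_real_derivative)

definition boundary_term ::
  "(real \<Rightarrow> real) \<Rightarrow> (real \<Rightarrow> real) \<Rightarrow> (real \<Rightarrow> real) \<Rightarrow> (real \<Rightarrow> real) \<Rightarrow> real \<Rightarrow> real"
  where "boundary_term x y v1 v2 t =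
    (curve_det x y v1 v2 1 3 t + 3 * curve_det x y v1 v2 2 2 t + 3 * curve_det x y v1 v2 3 1 t
      + curve_det x y v1 v2 4 0 t) / 3
    + kappa x y t * (2 * curve_det x y v1 v2 1 1 t + curve_det x y v1 v2 2 0 t)
    - kappa_s x y t * curve_det x y v1 v2 1 0 t / 3"

lemma pert_det_0: "pert_det x y v1 v2 i j 0 t = self_det x y i j t"
  by (simp add: pert_det_def curve_det_def)

lemma pert_det_deriv_0:
  "pert_det_deriv x y v1 v2 i j 0 t = curve_det x y v1 v2 i j t - curve_det x y v1 v2 j i t"
  by (simp add: pert_det_deriv_def curve_det_def det2_def)

lemma curv_density_deriv_unimodular:
  "curv_density_deriv A 1 0 0 dA dP dP' dP'' = dA + dP'' / 3 - 4/3 * A * dP"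
  by (simp add: curv_density_deriv_def field_simps)

context ea_arc_length_curve
begin

lemma curve_det_frenet:
  assumes "t \<in> I"
  shows "curve_det x y u v 3 j t = - kappa x y t * curve_det x y u v 1 j t"
    "curve_det x y u v 4 j t = - kappa_s x y t * curve_det x y u v 1 j t - kappa x y t * curve_det x y u v 2 j t"
    "curve_det x y u v 5 j t =
      (kappa x y t ^ 2 - kappa_ss x y t) * curve_det x y u v 1 j t - 2 * kappa_s x y t * curve_det x y u v 2 j t"
  unfolding curve_det_def det2_def Dn_3_eq[OF assms] Dn_4_5_eq[OF assms]
  by (simp_all add: algebra_simps)

lemma pert_density_deriv_0:
  assumes t: "t \<in> I"
  shows "pert_density_deriv x y v1 v2 0 t =
    curve_det x y v1 v2 2 3 t - curve_det x y v1 v2 3 2 t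
    + (curve_det x y v1 v2 2 3 t - curve_det x y v1 v2 3 2 t + curve_det x y v1 v2 1 4 t - curve_det x y v1 v2 4 1 t) / 3
    - 4/3 * kappa x y t * (curve_det x y v1 v2 1 2 t - curve_det x y v1 v2 2 1 t)"
  using unimodular[OF t] self_det_1_3[OF t] self_det_1_4[OF t]
  by (simp add: pert_density_deriv_def pert_det_0 pert_det_deriv_0 kappa_def curv_density_deriv_unimodular)

end

lemma one_plus_small_quadratic_pos:
  fixes e q1 q2 B :: real
  assumes "\<bar>e\<bar> \<le> 1" "\<bar>q1\<bar> + \<bar>q2\<bar> \<le> B" "\<bar>e\<bar> * B < 1"
  shows "1 + e * q1 + e^2 * q2 > 0"
proof -
  have "\<bar>e\<bar> * \<bar>e\<bar> \<le> \<bar>e\<bar>"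
    using mult_left_mono[OF assms(1), of "\<bar>e\<bar>"] by simp
  then have "\<bar>e\<bar> * \<bar>e\<bar> * \<bar>q2\<bar> \<le> \<bar>e\<bar> * \<bar>q2\<bar>"
    by (rule mult_right_mono) simp
  then have "\<bar>e * q1 + e^2 * q2\<bar> \<le> \<bar>e\<bar> * (\<bar>q1\<bar> + \<bar>q2\<bar>)"
    using abs_triangle_ineq[of "e * q1" "e^2 * q2"]
    by (simp add: abs_mult power2_eq_square distrib_left)
  also have "\<dots> \<le> \<bar>e\<bar> * B"
    using assms(2) by (simp add: mult_left_mono)
  finally show ?thesis
    using assms(3) by linarith
qed

lemma continuous_on_pert_det:
  assumes "C_inf_on I x" "C_inf_on I y" "C_inf_on I v1" "C_inf_on I v2" "T \<subseteq> I"
  shows "continuous_on T (pert_det x y v1 v2 i j e)"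
    "continuous_on (E \<times> T) (\<lambda>z. pert_det x y v1 v2 i j (fst z) (snd z))"
    "continuous_on (E \<times> T) (\<lambda>z. pert_det_deriv x y v1 v2 i j (fst z) (snd z))"
proof -
  have "continuous_on T (Dn k f)" if "C_inf_on I f" for k f
    using continuous_on_subset[OF C_inf_on_continuous_on[OF that] assms(5)] .
  note c = this[OF assms(1)] this[OF assms(2)] this[OF assms(3)] this[OF assms(4)]
  show "continuous_on T (pert_det x y v1 v2 i j e)"
    unfolding pert_det_def[abs_def] det2_def by (intro continuous_intros c)
  have "continuous_on (E \<times> T) (\<lambda>z. Dn k f (snd z))" if "C_inf_on I f" for k f
    by (rule continuous_on_compose2[OF C_inf_on_continuous_on[OF that] continuous_on_snd])
       (use assms(5) in auto)
  note c = this[OF assms(1)] this[OF assms(2)] this[OF assms(3)] this[OF assms(4)]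
  show "continuous_on (E \<times> T) (\<lambda>z. pert_det x y v1 v2 i j (fst z) (snd z))"
    "continuous_on (E \<times> T) (\<lambda>z. pert_det_deriv x y v1 v2 i j (fst z) (snd z))"
    unfolding pert_det_def pert_det_deriv_def det2_def
    by (intro continuous_intros c)+
qed

locale ea_curve_variation = ea_arc_length_curve +
  fixes v1 v2 :: "real \<Rightarrow> real" and a b :: real
  assumes admissible: "admissible_var I v1 v2 a b"
begin

lemma smooth_v1: "C_inf_on I v1" and smooth_v2: "C_inf_on I v2"
  and a_in_I: "a \<in> I" and b_in_I: "b \<in> I" and a_less_b: "a < b"
  using admissible by (auto simp: admissible_var_def)

lemma Icc_subset_I: "{a..b} \<subseteq> I"
  using mem_is_interval_1_I[OF interval_I a_in_I b_in_I] by auto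

lemma boundary_term_has_real_derivative:
  assumes t: "t \<in> I"
  shows "(boundary_term x y v1 v2 has_real_derivative
    pert_density_deriv x y v1 v2 0 t - 2/3 * curve_det x y v1 v2 1 0 t * (kappa_ss x y t + kappa x y t ^ 2)) (at t)"
proof -
  define V where "V i j = curve_det x y v1 v2 i j t" for i j
  define D where "D = (V 1 4 + 4 * V 2 3 + 6 * V 3 2 + 4 * V 4 1 + V 5 0) / 3
      + kappa_s x y t * (2 * V 1 1 + V 2 0) + kappa x y t * (2 * V 1 2 + 3 * V 2 1 + V 3 0)
      - (kappa_ss x y t * V 1 0 + kappa_s x y t * (V 2 0 + V 1 1)) / 3"
  have "(boundary_term x y v1 v2 has_real_derivative D) (at t)"
    unfolding boundary_term_def[abs_def] D_def V_def
    by (auto intro!: derivative_eq_intros kappa_has_real_derivative[OF t] kappa_s_has_real_derivative[OF t]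
        curve_det_has_real_derivative[OF smooth_x smooth_y smooth_v1 smooth_v2 t]
        simp: numeral_eq_Suc field_simps)
  moreover have "pert_density_deriv x y v1 v2 0 t
      - 2/3 * curve_det x y v1 v2 1 0 t * (kappa_ss x y t + kappa x y t ^ 2) = D"
    unfolding pert_density_deriv_0[OF t] D_def V_def curve_det_frenet[OF t]
    by (simp add: field_simps power2_eq_square)
  ultimately show ?thesis
    by simp
qed

lemma Dn_variation_eq_0:
  assumes "t \<in> I" "t \<notin> {a<..<b}"
  shows "Dn k v1 t = 0 \<and> Dn k v2 t = 0"
  using admissible Dn_eq_0_if_eq_0_outside_Icc[OF open_I _ a_less_b _ assms]
  unfolding admissible_var_def by blast

lemma boundary_term_eq_0: "t \<in> I \<Longrightarrow> t \<notin> {a<..<b} \<Longrightarrow> boundary_term x y v1 v2 t = 0"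
  using Dn_variation_eq_0[of t 0] Dn_variation_eq_0[of t 1] Dn_variation_eq_0[of t 2]
    Dn_variation_eq_0[of t 3]
  by (simp add: boundary_term_def curve_det_def det2_def)

lemma pert_det_pos_near_0:
  obtains U where "open U" "convex U" "0 \<in> U" "\<And>e t. e \<in> U \<Longrightarrow> t \<in> I \<Longrightarrow> pert_det x y v1 v2 1 2 e t > 0"
proof -
  define Q1 where "Q1 t = pert_det_deriv x y v1 v2 1 2 0 t" for t
  define Q2 where "Q2 t = det2 (Dn 1 v1 t) (Dn 1 v2 t) (Dn 2 v1 t) (Dn 2 v2 t)" for t
  have "pert_det x y v1 v2 1 2 e t = self_det x y 1 2 t + e * Q1 t + e^2 * Q2 t" for e t
    by (simp add: pert_det_def pert_det_deriv_def Q1_def Q2_def curve_det_def det2_def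
        algebra_simps power2_eq_square)
  then have expand: "pert_det x y v1 v2 1 2 e t = 1 + e * Q1 t + e^2 * Q2 t" if "t \<in> I" for e t
    using unimodular[OF that] by simp
  have "continuous_on {a..b} (Dn k f)" if "C_inf_on I f" for k f
    using continuous_on_subset[OF C_inf_on_continuous_on[OF that] Icc_subset_I] .
  note c = this[OF smooth_x] this[OF smooth_y] this[OF smooth_v1] this[OF smooth_v2]
  have "continuous_on {a..b} (\<lambda>t. \<bar>Q1 t\<bar> + \<bar>Q2 t\<bar>)"
    unfolding Q1_def Q2_def pert_det_deriv_def det2_def by (intro continuous_intros c)
  then have "bounded ((\<lambda>t. \<bar>Q1 t\<bar> + \<bar>Q2 t\<bar>) ` {a..b})"
    by (intro compact_imp_bounded compact_continuous_image) auto
  then obtain B where B: "B > 0" "\<And>t. t \<in> {a..b} \<Longrightarrow> \<bar>Q1 t\<bar> + \<bar>Q2 t\<bar> \<le> B"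
    unfolding bounded_pos by auto
  define \<delta> where "\<delta> = min 1 (1 / B)"
  show ?thesis
  proof
    show "open (ball (0::real) \<delta>)" "convex (ball (0::real) \<delta>)" "0 \<in> ball (0::real) \<delta>"
      using B by (auto simp: \<delta>_def convex_ball)
    fix e t :: real
    assume "e \<in> ball 0 \<delta>" and t: "t \<in> I"
    then have e: "\<bar>e\<bar> < min 1 (1 / B)"
      by (simp add: \<delta>_def)
    show "pert_det x y v1 v2 1 2 e t > 0"
    proof (cases "t \<in> {a<..<b}")
      case True
      have "\<bar>e\<bar> * B < 1"
        using e B(1) by (simp add: field_simps)
      then show ?thesis
        unfolding expand[OF t] using one_plus_small_quadratic_pos[OF _ B(2)] e True by simp
    next
      case False
      then have "Q1 t = 0" "Q2 t = 0"
        using Dn_variation_eq_0[OF t False, of 1] Dn_variation_eq_0[OF t False, of 2]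
        by (simp_all add: Q1_def Q2_def pert_det_deriv_def det2_def)
      then show ?thesis
        unfolding expand[OF t] by simp
    qed
  qed
qed

lemma ea_curv_gen_mult_speed_pert:
  assumes pos: "\<And>t. t \<in> I \<Longrightarrow> pert_det x y v1 v2 1 2 e t > 0" and t: "t \<in> I"
  shows "ea_curv_gen (\<lambda>t. x t + e * v1 t) (\<lambda>t. y t + e * v2 t) t *
           ea_speed (\<lambda>t. x t + e * v1 t) (\<lambda>t. y t + e * v2 t) t = pert_density x y v1 v2 e t"
proof -
  have d: "((\<lambda>t. Dn n f t + e * Dn n g t) has_real_derivative Dn (Suc n) f s + e * Dn (Suc n) g s) (at s)"
    if "C_inf_on I f" "C_inf_on I g" "s \<in> I" for f g n s
    by (intro DERIV_add DERIV_cmult C_inf_on_has_real_derivative[OF that(1,3)]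
        C_inf_on_has_real_derivative[OF that(2,3)])
  have chain: "((\<lambda>t. f t + e * g t) has_real_derivative Dn 1 f s + e * Dn 1 g s) (at s)"
      "((\<lambda>t. Dn 1 f t + e * Dn 1 g t) has_real_derivative Dn 2 f s + e * Dn 2 g s) (at s)"
      "((\<lambda>t. Dn 2 f t + e * Dn 2 g t) has_real_derivative Dn 3 f s + e * Dn 3 g s) (at s)"
      "((\<lambda>t. Dn 3 f t + e * Dn 3 g t) has_real_derivative Dn 4 f s + e * Dn 4 g s) (at s)"
    if "C_inf_on I f" "C_inf_on I g" "s \<in> I" for f g s
    using d[OF that, of 0] d[OF that, of 1] d[OF that, of 2] d[OF that, of 3]
    by (simp_all add: numeral_eq_Suc)
  from ea_curv_gen_mult_speed[OF open_I chain[OF smooth_x smooth_v1] chain[OF smooth_y smooth_v2] _ t]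
  show ?thesis
    using pos by (simp add: pert_density_def pert_det_def)
qed

lemma continuous_on_pert_density:
  assumes pos: "\<And>e t. e \<in> E \<Longrightarrow> t \<in> I \<Longrightarrow> pert_det x y v1 v2 1 2 e t > 0"
  shows "e \<in> E \<Longrightarrow> continuous_on {a..b} (pert_density x y v1 v2 e)"
    "continuous_on (E \<times> {a..b}) (\<lambda>(e, t). pert_density_deriv x y v1 v2 e t)"
proof -
  note cont = continuous_on_pert_det[OF smooth_x smooth_y smooth_v1 smooth_v2 Icc_subset_I]
  show "continuous_on {a..b} (pert_density x y v1 v2 e)" if "e \<in> E"
    unfolding pert_density_def[abs_def] using pos[OF that] Icc_subset_I
    by (intro continuous_on_curv_density continuous_on_add cont) auto
  have "z \<in> E \<times> {a..b} \<Longrightarrow> pert_det x y v1 v2 1 2 (fst z) (snd z) > 0" for z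
    using pos Icc_subset_I by (cases z) auto
  then show "continuous_on (E \<times> {a..b}) (\<lambda>(e, t). pert_density_deriv x y v1 v2 e t)"
    unfolding case_prod_unfold pert_density_deriv_def
    by (intro continuous_on_curv_density_deriv continuous_on_add cont)
qed

lemma curv_variation_has_real_derivative:
  "(curv_variation x y v1 v2 a b has_real_derivative integral {a..b} (pert_density_deriv x y v1 v2 0)) (at 0)"
proof -
  obtain U where U: "open U" "convex U" "0 \<in> U"
    and pos: "\<And>e t. e \<in> U \<Longrightarrow> t \<in> I \<Longrightarrow> pert_det x y v1 v2 1 2 e t > 0"
    using pert_det_pos_near_0 by blast
  have "((\<lambda>e. integral (cbox a b) (pert_density x y v1 v2 e)) has_field_derivative
      integral (cbox a b) (pert_density_deriv x y v1 v2 0)) (at 0 within U)"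
  proof (rule leibniz_rule_field_derivative[OF _ _ _ U(3,2)])
    fix e t
    assume "e \<in> U" "t \<in> cbox a b"
    then have "pert_det x y v1 v2 1 2 e t > 0"
      using pos Icc_subset_I by auto
    then show "((\<lambda>e. pert_density x y v1 v2 e t) has_field_derivative pert_density_deriv x y v1 v2 e t)
        (at e within U)"
      by (rule has_field_derivative_at_within[OF pert_density_has_real_derivative])
  next
    fix e
    assume "e \<in> U"
    then show "pert_density x y v1 v2 e integrable_on cbox a b"
      using continuous_on_pert_density(1)[OF pos] by (simp add: integrable_continuous_interval)
  next
    show "continuous_on (U \<times> cbox a b) (\<lambda>(e, t). pert_density_deriv x y v1 v2 e t)"
      using continuous_on_pert_density(2)[OF pos] by simp
  qed
  then have "((\<lambda>e. integral {a..b} (pert_density x y v1 v2 e)) has_real_derivative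
      integral {a..b} (pert_density_deriv x y v1 v2 0)) (at 0)"
    using at_within_open[OF U(3,1)] by simp
  moreover have "integral {a..b} (pert_density x y v1 v2 e) = curv_variation x y v1 v2 a b e"
    if "e \<in> U" for e
    unfolding curv_variation_def total_curv_def
    by (rule integral_cong) (use ea_curv_gen_mult_speed_pert[OF pos[OF that]] Icc_subset_I in auto)
  ultimately show ?thesis
    by (rule has_field_derivative_transform_within_open[OF _ U(1,3)])
qed

lemma first_variation:
  "(curv_variation x y v1 v2 a b has_real_derivative
     2/3 * integral {a..b} (\<lambda>t. curve_det x y v1 v2 1 0 t * (kappa_ss x y t + kappa x y t ^ 2))) (at 0)"
proof -
  define g where "g t = 2/3 * curve_det x y v1 v2 1 0 t * (kappa_ss x y t + kappa x y t ^ 2)" for t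
  have "continuous_on {a..b} (curve_det x y u v i j)" if "C_inf_on I u" "C_inf_on I v" for u v i j
    using continuous_on_subset[OF continuous_on_curve_det[OF smooth_x smooth_y that] Icc_subset_I] .
  note c = this[OF smooth_v1 smooth_v2] this[OF smooth_x smooth_y]
  have "continuous_on {a..b} g"
    unfolding g_def[abs_def] kappa_ss_def kappa_def by (intro continuous_intros c)
  then have g: "(g has_integral integral {a..b} g) {a..b}"
    using integrable_continuous_interval by blast
  have "((\<lambda>t. pert_density_deriv x y v1 v2 0 t - g t) has_integral
      boundary_term x y v1 v2 b - boundary_term x y v1 v2 a) {a..b}"
  proof (rule fundamental_theorem_of_calculus)
    fix t
    assume "t \<in> {a..b}"
    then have "(boundary_term x y v1 v2 has_real_derivative pert_density_deriv x y v1 v2 0 t - g t) (at t)"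
      unfolding g_def using boundary_term_has_real_derivative Icc_subset_I by blast
    then show "(boundary_term x y v1 v2 has_vector_derivative pert_density_deriv x y v1 v2 0 t - g t)
        (at t within {a..b})"
      by (simp add: has_real_derivative_iff_has_vector_derivative has_vector_derivative_at_within)
  qed (use a_less_b in simp)
  then have "((\<lambda>t. pert_density_deriv x y v1 v2 0 t - g t) has_integral 0) {a..b}"
    using boundary_term_eq_0 a_in_I b_in_I by simp
  from has_integral_add[OF g this]
  have "integral {a..b} (pert_density_deriv x y v1 v2 0) = integral {a..b} g"
    by (simp add: integral_unique)
  moreover have "integral {a..b} g =
      2/3 * integral {a..b} (\<lambda>t. curve_det x y v1 v2 1 0 t * (kappa_ss x y t + kappa x y t ^ 2))"
    unfolding g_def by (simp add: mult.assoc)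
  ultimately show ?thesis
    using curv_variation_has_real_derivative by (simp only:)
qed

end

section \<open>Critical points\<close>

lemma area_variation_eq: "area_variation x y v1 v2 a b = - integral {a..b} (curve_det x y v1 v2 1 0)"
  by (simp add: area_variation_def curve_det_def[abs_def])

context ea_curve_variation
begin

lemma integral_variation_affine:
  assumes "continuous_on I h"
  shows "integral {a..b} (\<lambda>t. curve_det x y v1 v2 1 0 t * (c * h t + d)) =
    c * integral {a..b} (\<lambda>t. curve_det x y v1 v2 1 0 t * h t) + d * integral {a..b} (curve_det x y v1 v2 1 0)"
proof -
  have f: "continuous_on {a..b} (curve_det x y v1 v2 1 0)"
    using continuous_on_subset[OF continuous_on_curve_det[OF smooth_x smooth_y smooth_v1 smooth_v2] Icc_subset_I] .
  moreover have "continuous_on {a..b} h"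
    using continuous_on_subset[OF assms Icc_subset_I] .
  ultimately have "(\<lambda>t. curve_det x y v1 v2 1 0 t * h t) integrable_on {a..b}"
    "curve_det x y v1 v2 1 0 integrable_on {a..b}"
    by (auto intro!: integrable_continuous_interval continuous_intros)
  then have "((\<lambda>t. c * (curve_det x y v1 v2 1 0 t * h t) + curve_det x y v1 v2 1 0 t * d) has_integral
      c * integral {a..b} (\<lambda>t. curve_det x y v1 v2 1 0 t * h t) + integral {a..b} (curve_det x y v1 v2 1 0) * d)
      {a..b}"
    by (intro has_integral_add has_integral_mult_right has_integral_mult_left integrable_integral)
  moreover have "(\<lambda>t. curve_det x y v1 v2 1 0 t * (c * h t + d)) =
      (\<lambda>t. c * (curve_det x y v1 v2 1 0 t * h t) + curve_det x y v1 v2 1 0 t * d)"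
    by (simp add: algebra_simps)
  ultimately show ?thesis
    by (simp add: integral_unique mult.commute)
qed

lemma first_variation_const:
  assumes "\<And>t. t \<in> I \<Longrightarrow> kappa_ss x y t + kappa x y t ^ 2 = K"
  shows "(curv_variation x y v1 v2 a b has_real_derivative - 2/3 * K * area_variation x y v1 v2 a b) (at 0)"
proof -
  have "integral {a..b} (\<lambda>t. curve_det x y v1 v2 1 0 t * (kappa_ss x y t + kappa x y t ^ 2)) =
      K * integral {a..b} (curve_det x y v1 v2 1 0)"
    using assms Icc_subset_I by (subst integral_cong[where g = "\<lambda>t. K * curve_det x y v1 v2 1 0 t"]) auto
  then show ?thesis
    using first_variation by (simp add: area_variation_eq mult.assoc)
qed

end

context ea_arc_length_curve
begin

lemma eq_0_if_orthogonal_to_variations: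
  assumes h: "continuous_on I h"
    and orth: "\<And>v1 v2 a b. admissible_var I v1 v2 a b \<Longrightarrow>
      integral {a..b} (\<lambda>s. curve_det x y v1 v2 1 0 s * h s) = 0"
    and t: "t \<in> I"
  shows "h t = 0"
proof (rule ccontr)
  assume "h t \<noteq> 0"
  define \<sigma> where "\<sigma> = sgn (h t)"
  define w where "w s = \<sigma> * h s * det2 (Dn 1 x s) (Dn 1 y s) (Dn 2 x t) (Dn 2 y t)" for s
  have "continuous_on I w"
    unfolding w_def[abs_def] det2_def
    by (intro continuous_intros h C_inf_on_continuous_on smooth_x smooth_y)
  moreover have "w t > 0"
    using unimodular[OF t] \<open>h t \<noteq> 0\<close> by (auto simp: w_def \<sigma>_def curve_det_def sgn_if)
  ultimately obtain a b where ab: "a < b" "a \<in> I" "b \<in> I"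
    and pos: "integral {a..b} (\<lambda>s. bump a b s * w s) > 0"
    using bump_integral_pos[OF open_I t] by metis
  have "admissible_var I (\<lambda>s. \<sigma> * Dn 2 x t * bump a b s) (\<lambda>s. \<sigma> * Dn 2 y t * bump a b s) a b"
    by (rule admissible_var_bump[OF ab])
  from orth[OF this] have "integral {a..b} (\<lambda>s. bump a b s * w s) = 0"
    by (simp add: w_def curve_det_def det2_def algebra_simps)
  with pos show False
    by simp
qed

lemma continuous_on_kappa_ss_plus_sq: "continuous_on I (\<lambda>t. kappa_ss x y t + kappa x y t ^ 2)"
  unfolding kappa_ss_def kappa_def
  by (intro continuous_intros continuous_on_curve_det smooth_x smooth_y)

lemma kappa_ss_plus_sq_const_if_critical:
  assumes critical: "area_constrained_critical I x y" and not_free: "\<not> unconstrained_critical I x y"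
  obtains K where "K \<noteq> 0" "\<And>t. t \<in> I \<Longrightarrow> kappa_ss x y t + kappa x y t ^ 2 = K"
proof -
  obtain lam where lam: "\<And>v1 v2 a b. admissible_var I v1 v2 a b \<Longrightarrow>
      (curv_variation x y v1 v2 a b has_real_derivative lam * area_variation x y v1 v2 a b) (at 0)"
    using critical unfolding area_constrained_critical_def by blast
  have EL: "2/3 * (kappa_ss x y t + kappa x y t ^ 2) + lam = 0" if t: "t \<in> I" for t
  proof (rule eq_0_if_orthogonal_to_variations[OF _ _ t])
    show "continuous_on I (\<lambda>t. 2/3 * (kappa_ss x y t + kappa x y t ^ 2) + lam)"
      by (intro continuous_intros continuous_on_kappa_ss_plus_sq)
    fix v1 v2 a b
    assume adm: "admissible_var I v1 v2 a b"
    interpret ea_curve_variation I x y v1 v2 a b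
      by unfold_locales (fact adm)
    have "2/3 * integral {a..b} (\<lambda>t. curve_det x y v1 v2 1 0 t * (kappa_ss x y t + kappa x y t ^ 2))
        = lam * area_variation x y v1 v2 a b"
      by (rule DERIV_unique[OF first_variation lam[OF adm]])
    then show "integral {a..b}
        (\<lambda>t. curve_det x y v1 v2 1 0 t * (2/3 * (kappa_ss x y t + kappa x y t ^ 2) + lam)) = 0"
      unfolding integral_variation_affine[OF continuous_on_kappa_ss_plus_sq]
      by (simp add: area_variation_eq)
  qed
  have "lam \<noteq> 0"
  proof
    assume "lam = 0"
    then have "unconstrained_critical I x y"
      using lam EL by (simp add: unconstrained_critical_def)
    with not_free show False ..
  qed
  show thesis
  proof
    show "- 3/2 * lam \<noteq> 0"
      using \<open>lam \<noteq> 0\<close> by simp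
    show "kappa_ss x y t + kappa x y t ^ 2 = - 3/2 * lam" if "t \<in> I" for t
      using EL[OF that] by (simp add: field_simps)
  qed
qed

lemma critical_if_kappa_ss_plus_sq_const:
  assumes "I \<noteq> {}" "K \<noteq> 0" and const: "\<And>t. t \<in> I \<Longrightarrow> kappa_ss x y t + kappa x y t ^ 2 = K"
  shows "area_constrained_critical I x y \<and> \<not> unconstrained_critical I x y"
proof
  have deriv: "(curv_variation x y v1 v2 a b has_real_derivative - 2/3 * K * area_variation x y v1 v2 a b) (at 0)"
    if "admissible_var I v1 v2 a b" for v1 v2 a b
  proof -
    interpret ea_curve_variation I x y v1 v2 a b
      by unfold_locales (fact that)
    show ?thesis
      using first_variation_const const by blast
  qed
  then show "area_constrained_critical I x y"
    unfolding area_constrained_critical_def by blast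
  show "\<not> unconstrained_critical I x y"
  proof
    assume free: "unconstrained_critical I x y"
    have "integral {a..b} (\<lambda>s. curve_det x y v1 v2 1 0 s * K) = 0"
      if "admissible_var I v1 v2 a b" for v1 v2 a b
    proof -
      have "- 2/3 * K * area_variation x y v1 v2 a b = 0"
        using DERIV_unique[OF deriv[OF that]] free that unfolding unconstrained_critical_def by blast
      then show ?thesis
        using \<open>K \<noteq> 0\<close> by (simp add: area_variation_eq)
    qed
    then have "K = 0" if "t \<in> I" for t
      using eq_0_if_orthogonal_to_variations[of "\<lambda>_. K", OF continuous_on_const _ that] by blast
    with assms(1,2) show False
      by blast
  qed
qed

end

section \<open>The support function\<close>

context ea_arc_length_curve
begin

lemma center_has_real_derivative:
  assumes t: "t \<in> I" and dz: "\<And>n. (Dn n z has_real_derivative Dn (Suc n) z t) (at t)"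
    and z3: "Dn 3 z t = - kappa x y t * Dn 1 z t"
  shows "((\<lambda>s. z s - c * kappa_s x y s * Dn 1 z s + c * kappa x y s * Dn 2 z s) has_real_derivative
      Dn 1 z t * (1 - c * (kappa_ss x y t + kappa x y t ^ 2))) (at t)"
proof -
  have "((\<lambda>s. z s - c * kappa_s x y s * Dn 1 z s + c * kappa x y s * Dn 2 z s) has_real_derivative
      Dn 1 z t - c * (kappa_ss x y t * Dn 1 z t + kappa_s x y t * Dn 2 z t)
        + c * (kappa_s x y t * Dn 2 z t + kappa x y t * Dn 3 z t)) (at t)"
    using dz[of 0] dz[of 1] dz[of 2]
    by (auto intro!: derivative_eq_intros kappa_has_real_derivative[OF t]
        kappa_s_has_real_derivative[OF t] simp: numeral_eq_Suc algebra_simps)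
  moreover have "Dn 1 z t - c * (kappa_ss x y t * Dn 1 z t + kappa_s x y t * Dn 2 z t)
        + c * (kappa_s x y t * Dn 2 z t + kappa x y t * Dn 3 z t)
      = Dn 1 z t * (1 - c * (kappa_ss x y t + kappa x y t ^ 2))"
    by (simp add: z3 algebra_simps power2_eq_square)
  ultimately show ?thesis
    by simp
qed

lemma support_fn_eq_if_kappa_ss_plus_sq_const:
  assumes K: "K \<noteq> 0" and const: "\<And>t. t \<in> I \<Longrightarrow> kappa_ss x y t + kappa x y t ^ 2 = K"
  shows "\<exists>o1 o2. \<forall>s\<in>I. support_fn x y o1 o2 s = (1 / K) * ea_kappa x y s"
proof -
  define c where "c = 1 / K"
  have c: "c * (kappa_ss x y t + kappa x y t ^ 2) = 1" if "t \<in> I" for t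
    using const[OF that] K by (simp add: c_def)
  define O1 where "O1 s = x s - c * kappa_s x y s * Dn 1 x s + c * kappa x y s * Dn 2 x s" for s
  define O2 where "O2 s = y s - c * kappa_s x y s * Dn 1 y s + c * kappa x y s * Dn 2 y s" for s
  have "(O1 has_real_derivative 0) (at t) \<and> (O2 has_real_derivative 0) (at t)" if t: "t \<in> I" for t
    unfolding O1_def[abs_def] O2_def[abs_def]
    using center_has_real_derivative[OF t Dn_has_real_derivative(1)[OF t] Dn_3_eq(1)[OF t], of c]
      center_has_real_derivative[OF t Dn_has_real_derivative(2)[OF t] Dn_3_eq(2)[OF t], of c]
    by (simp add: c[OF t])
  moreover have "convex I"
    by (rule is_interval_convex[OF interval_I])
  ultimately obtain o1 o2 where o: "\<forall>s\<in>I. O1 s = o1" "\<forall>s\<in>I. O2 s = o2"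
    using has_field_derivative_zero_constant has_field_derivative_at_within by metis
  have "support_fn x y o1 o2 s = c * ea_kappa x y s" if s: "s \<in> I" for s
  proof -
    have "support_fn x y o1 o2 s = det2 (x s - O1 s) (y s - O2 s) (Dn 1 x s) (Dn 1 y s)"
      using o s by (simp add: support_fn_def)
    also have "\<dots> = c * kappa x y s * self_det x y 1 2 s"
      by (simp add: O1_def O2_def curve_det_def det2_def algebra_simps)
    finally show ?thesis
      using unimodular[OF s] ea_kappa_eq[OF s] by simp
  qed
  then show ?thesis
    unfolding c_def by blast
qed

lemma kappa_ss_plus_sq_eq_if_support_fn_eq:
  assumes c: "c \<noteq> 0" and sf: "\<forall>s\<in>I. support_fn x y o1 o2 s = c * ea_kappa x y s"
    and t: "t \<in> I"
  shows "kappa_ss x y t + kappa x y t ^ 2 = 1 / c"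
proof -
  define \<rho> where "\<rho> s = det2 (x s - o1) (y s - o2) (Dn 1 x s) (Dn 1 y s)" for s
  define \<rho>' where "\<rho>' s = det2 (x s - o1) (y s - o2) (Dn 2 x s) (Dn 2 y s)" for s
  have derivs: "(x has_real_derivative Dn 1 x s) (at s)" "(Dn 1 x has_real_derivative Dn 2 x s) (at s)"
      "(Dn 2 x has_real_derivative Dn 3 x s) (at s)" "(y has_real_derivative Dn 1 y s) (at s)"
      "(Dn 1 y has_real_derivative Dn 2 y s) (at s)" "(Dn 2 y has_real_derivative Dn 3 y s) (at s)"
      "(kappa x y has_real_derivative kappa_s x y s) (at s)"
      "(kappa_s x y has_real_derivative kappa_ss x y s) (at s)" if "s \<in> I" for s
    using Dn_has_real_derivative[OF that, of 0] Dn_has_real_derivative[OF that, of 1]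
      Dn_has_real_derivative[OF that, of 2] kappa_has_real_derivative[OF that]
      kappa_s_has_real_derivative[OF that] by (simp_all add: numeral_eq_Suc)
  have \<rho>: "\<rho> s - c * kappa x y s = 0" if "s \<in> I" for s
    using sf that ea_kappa_eq[OF that] by (simp add: support_fn_def \<rho>_def)
  have \<rho>': "\<rho>' s - c * kappa_s x y s = 0" if s: "s \<in> I" for s
  proof -
    have "((\<lambda>s. \<rho> s - c * kappa x y s) has_real_derivative \<rho>' s - c * kappa_s x y s) (at s)"
      unfolding \<rho>_def[abs_def] \<rho>'_def det2_def
      by (auto intro!: derivative_eq_intros derivs[OF s, simplified] simp: numeral_eq_Suc algebra_simps)
    from DERIV_zero_if_const_on_open[OF open_I s \<rho> this] show ?thesis .
  qed
  have "((\<lambda>s. \<rho>' s - c * kappa_s x y s) has_real_derivative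
      self_det x y 1 2 t + det2 (x t - o1) (y t - o2) (Dn 3 x t) (Dn 3 y t) - c * kappa_ss x y t) (at t)"
    unfolding \<rho>'_def[abs_def] det2_def curve_det_def
    by (auto intro!: derivative_eq_intros derivs[OF t, unfolded numeral_eq_Suc, simplified]
        simp: numeral_eq_Suc algebra_simps)
  from DERIV_zero_if_const_on_open[OF open_I t \<rho>' this]
  have "1 - kappa x y t * \<rho> t - c * kappa_ss x y t = 0"
    using unimodular[OF t] by (simp add: Dn_3_eq[OF t] \<rho>_def det2_def algebra_simps)
  then show ?thesis
    using \<rho>[OF t] c by (simp add: field_simps power2_eq_square)
qed

end

theorem theorem3:
  fixes x y :: "real \<Rightarrow> real" and I :: "real set"
  assumes "open I" and "is_interval I" and "I \<noteq> {}"
    and "C_inf_on I x" and "C_inf_on I y"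
    and "\<forall>s\<in>I. det2 (deriv x s) (deriv y s) ((deriv ^^ 2) x s) ((deriv ^^ 2) y s) = 1"
  shows "(area_constrained_critical I x y \<and> \<not> unconstrained_critical I x y) \<longleftrightarrow>
         (\<exists>o1 o2 c. c \<noteq> 0 \<and> (\<forall>s\<in>I. support_fn x y o1 o2 s = c * ea_kappa x y s))"
proof -
  interpret ea_arc_length_curve I x y
    using assms by unfold_locales (simp_all add: curve_det_def)
  have "(area_constrained_critical I x y \<and> \<not> unconstrained_critical I x y) \<longleftrightarrow>
      (\<exists>K. K \<noteq> 0 \<and> (\<forall>t\<in>I. kappa_ss x y t + kappa x y t ^ 2 = K))"
    using kappa_ss_plus_sq_const_if_critical critical_if_kappa_ss_plus_sq_const \<open>I \<noteq> {}\<close> by metis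
  also have "\<dots> \<longleftrightarrow> (\<exists>o1 o2 c. c \<noteq> 0 \<and> (\<forall>s\<in>I. support_fn x y o1 o2 s = c * ea_kappa x y s))"
  proof
    assume "\<exists>K. K \<noteq> 0 \<and> (\<forall>t\<in>I. kappa_ss x y t + kappa x y t ^ 2 = K)"
    then obtain K where "K \<noteq> 0" "\<And>t. t \<in> I \<Longrightarrow> kappa_ss x y t + kappa x y t ^ 2 = K"
      by blast
    with support_fn_eq_if_kappa_ss_plus_sq_const
    show "\<exists>o1 o2 c. c \<noteq> 0 \<and> (\<forall>s\<in>I. support_fn x y o1 o2 s = c * ea_kappa x y s)"
      by (metis divide_eq_0_iff one_neq_zero)
  next
    assume "\<exists>o1 o2 c. c \<noteq> 0 \<and> (\<forall>s\<in>I. support_fn x y o1 o2 s = c * ea_kappa x y s)"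
    then show "\<exists>K. K \<noteq> 0 \<and> (\<forall>t\<in>I. kappa_ss x y t + kappa x y t ^ 2 = K)"
      using kappa_ss_plus_sq_eq_if_support_fn_eq by (metis divide_eq_0_iff one_neq_zero)
  qed
  finally show ?thesis .
qed

end
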